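(* Let $\nu\ge1$, let $\mathbf{F}_Q\in\mathbb{R}^{\nu\times\nu}$ be symmetric positive semidefinite, $\eta>0$, $\tilde{\mathbf{F}}_Q^{-1}:=(\mathbf{F}_Q+\eta\,\mathrm{Id}_\nu)^{-1}$, and $\underline g\in\mathbb{R}^\nu$. Let $\mathcal H$ be a Hermitian operator on $N$ qubits, $d=2^N$, and let $f_F,f_g>0$ be constants. Define the error-propagation coefficients $a_{kl}:=\sum_{i,j=1}^{\nu}[\tilde{\mathbf{F}}_Q^{-1}]_{ik}^2[\tilde{\mathbf{F}}_Q^{-1}]_{lj}^2\,g_l^2$ and $b_l:=\sum_{k=1}^\nu [\tilde{\mathbf{F}}_Q^{-1}]_{kl}^2$. Suppose each entry $[\mathbf{F}_Q]_{kl}$ is estimated from independent single-shot measurements with single-shot variance $V_{kl}\le f_F$, and each entry $g_l$ from independent single-shot measurements with single-shot variance $W_l\le \mathrm{Spc}[\mathcal H]\,f_g$. Suppose $N_F$ measurements are distributed uniformly over the $\nu^2$ matrix entries ($N_F/\nu^2$ each) and $N_g$ measurements uniformly over the $\nu$ gradient entries ($N_g/\nu$ each), so that the squared error of $\underline v=\tilde{\mathbf{F}}_Q^{-1}\underline g$ is $\epsilon^2=\epsilon_F^2+\epsilon_g^2$ with $\epsilon_F^2=\frac{\nu^2}{N_F}\sum_{k,l}a_{kl}V_{kl}$ and $\epsilon_g^2=\frac{\nu}{N_g}\sum_l b_lW_l$. Given $\epsilon>0$, let $N_F$ and $N_g$ be the numbers of measurements for which $\epsilon_F^2=\epsilon^2/2$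 and $\epsilon_g^2=\epsilon^2/2$ (so the total precision is $\epsilon$ at total cost $N_F+N_g$). Then $$N_F\le 2\,\epsilon^{-2}\nu^4\,\mathrm{Spc}[\tilde{\mathbf{F}}_Q^{-1}]^2\,\lVert g\rVert_\infty^2\,f_F,\qquad N_g\le 2\,\epsilon^{-2}\nu^2\,\mathrm{Spc}[\tilde{\mathbf{F}}_Q^{-1}]\,\mathrm{Spc}[\mathcal H]\,f_g.$$
   Context: For $A\in\mathbb{C}^{m\times m}$, $\mathrm{Spc}[A]:=\lVert A\rVert_F^2/m$ is the average of the squared singular values, where $\lVert\cdot\rVert_F$ is the Hilbert–Schmidt (Frobenius) norm; in particular $\mathrm{Spc}[\mathcal H]=\mathrm{Tr}[\mathcal H^2]/d$. $\lVert g\rVert_\infty=\max_l|g_l|$. In the paper's application $\mathbf{F}_Q$ is the quantum Fisher information matrix of a parametrised quantum state, $\underline g$ is the gradient of the energy $\mathrm{Tr}[\rho(\underline\theta)\mathcal H]$, and $f_F,f_g$ are setup-dependent constants bounding single-shot variances; the error model above is the paper's first-order error-propagation formula for $\epsilon^2=\sum_k\mathrm{Var}[v_k]$. *)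

theory Defs
  imports "HOL-Analysis.Analysis"
begin

definition hermitian_mat :: "complex^'m^'m \<Rightarrow> bool" where
  "hermitian_mat H \<longleftrightarrow> (\<forall>i j. H $ i $ j = cnj (H $ j $ i))"

definition spc :: "('a::real_normed_vector)^'m^'m \<Rightarrow> real" where
  "spc A = (\<Sum>i\<in>UNIV. \<Sum>j\<in>UNIV. (norm (A $ i $ j))^2) / real CARD('m)"

definition reg_inv :: "real^'n^'n \<Rightarrow> real \<Rightarrow> real^'n^'n" where
  "reg_inv F \<eta> = matrix_inv (F + \<eta> *\<^sub>R mat 1)"

definition coef_a :: "real^'n^'n \<Rightarrow> real^'n \<Rightarrow> 'n \<Rightarrow> 'n \<Rightarrow> real" where
  "coef_a Fi g k l = (\<Sum>i\<in>UNIV. \<Sum>j\<in>UNIV. (Fi $ i $ k)^2 * (Fi $ l $ j)^2 * (g $ l)^2)"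

definition coef_b :: "real^'n^'n \<Rightarrow> 'n \<Rightarrow> real" where
  "coef_b Fi l = (\<Sum>k\<in>UNIV. (Fi $ k $ l)^2)"

end

theory Submission
  imports Defs
begin

text \<open>Each coefficient \<open>a\<^sub>k\<^sub>l\<close> factorises into the squared norm of column \<open>k\<close> of the regularised
  inverse, the squared norm of its row \<open>l\<close>, and \<open>g\<^sub>l\<^sup>2\<close>. Bounding the variances by their maxima
  and summing over all column (row) indices turns both error sums into powers of the squared
  Frobenius norm \<open>\<nu> Spc[F\<^sup>-\<^sup>1]\<close>; solving \<open>\<epsilon>\<^sub>F\<^sup>2 = \<epsilon>\<^sub>g\<^sup>2 = \<epsilon>\<^sup>2/2\<close> for the measurement numbers gives
  the bounds. No property of the inverse beyond being a real matrix is needed.\<close>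

lemma sum_sum_square_eq_card_spc:
  fixes A :: "real^'n^'n"
  shows "(\<Sum>i\<in>UNIV. \<Sum>j\<in>UNIV. (A $ i $ j)^2) = real CARD('n) * spc A"
  by (simp add: spc_def)

lemma coef_b_nonneg: "0 \<le> coef_b A l"
  unfolding coef_b_def by (simp add: sum_nonneg)

lemma sum_coef_b: "(\<Sum>l\<in>UNIV. coef_b A l) = real CARD('n) * spc (A :: real^'n^'n)"
  unfolding coef_b_def sum_sum_square_eq_card_spc[symmetric] by (rule sum.swap)

lemma coef_a_factor: "coef_a A g k l = coef_b A k * (\<Sum>j\<in>UNIV. (A $ l $ j)^2) * (g $ l)^2"
  unfolding coef_a_def coef_b_def
  by (simp add: sum_distrib_left sum_distrib_right mult.assoc, rule sum.swap)

lemma square_component_le_infnorm: "(x $ i)^2 \<le> (infnorm x)^2"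
  by (metis abs_ge_zero component_le_infnorm_cart power2_abs power_mono)

lemma weighted_sum_coef_a_le:
  fixes A :: "real^'n^'n"
  assumes V: "\<forall>k l. 0 \<le> V k l \<and> V k l \<le> c"
  shows "(\<Sum>k\<in>UNIV. \<Sum>l\<in>UNIV. coef_a A g k l * V k l)
           \<le> (real CARD('n) * spc A)^2 * (infnorm g)^2 * c"
proof -
  define row where "row l = (\<Sum>j\<in>UNIV. (A $ l $ j)^2)" for l
  have coef_row_nonneg: "0 \<le> coef_b A k * row l" for k l
    unfolding row_def by (simp add: coef_b_nonneg sum_nonneg)
  have term_le: "coef_a A g k l * V k l \<le> coef_b A k * row l * ((infnorm g)^2 * c)" for k l
  proof -
    have "coef_a A g k l * V k l = coef_b A k * row l * ((g $ l)^2 * V k l)"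
      by (simp add: coef_a_factor row_def)
    also have "\<dots> \<le> coef_b A k * row l * ((infnorm g)^2 * c)"
      using V coef_row_nonneg square_component_le_infnorm
      by (intro mult_left_mono mult_mono) auto
    finally show ?thesis .
  qed
  have "(\<Sum>k\<in>UNIV. \<Sum>l\<in>UNIV. coef_a A g k l * V k l)
          \<le> (\<Sum>k\<in>UNIV. \<Sum>l\<in>UNIV. coef_b A k * row l * ((infnorm g)^2 * c))"
    by (intro sum_mono term_le)
  also have "\<dots> = (\<Sum>k\<in>UNIV. coef_b A k) * (\<Sum>l\<in>UNIV. row l) * ((infnorm g)^2 * c)"
    by (simp add: sum_distrib_left sum_distrib_right, rule sum.swap)
  also have "(\<Sum>k\<in>UNIV. coef_b A k) = real CARD('n) * spc A"
    by (rule sum_coef_b)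
  also have "(\<Sum>l\<in>UNIV. row l) = real CARD('n) * spc A"
    unfolding row_def sum_sum_square_eq_card_spc[symmetric] ..
  finally show ?thesis by (simp add: power2_eq_square mult_ac)
qed

lemma weighted_sum_coef_b_le:
  fixes A :: "real^'n^'n"
  assumes W: "\<forall>l. 0 \<le> W l \<and> W l \<le> c"
  shows "(\<Sum>l\<in>UNIV. coef_b A l * W l) \<le> real CARD('n) * spc A * c"
proof -
  have "(\<Sum>l\<in>UNIV. coef_b A l * W l) \<le> (\<Sum>l\<in>UNIV. coef_b A l * c)"
    using W coef_b_nonneg by (intro sum_mono mult_left_mono) auto
  also have "\<dots> = real CARD('n) * spc A * c"
    by (simp add: sum_distrib_right[symmetric] sum_coef_b)
  finally show ?thesis .
qed

text \<open>No positivity of \<open>N\<close> is needed: \<open>N = 0\<close> would force \<open>\<epsilon> = 0\<close> since \<open>c / 0 = 0\<close>.\<close>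

lemma measurements_eq_of_error:
  fixes c N E \<epsilon> :: real
  assumes "c / N * E = \<epsilon>^2 / 2" and "\<epsilon> \<noteq> 0"
  shows "N = 2 / \<epsilon>^2 * c * E"
proof -
  have "N \<noteq> 0" using assms by auto
  with assms show ?thesis by (simp add: field_simps)
qed

theorem theorem1:
  fixes F :: "real^'n^'n" and \<eta> :: real and g :: "real^'n"
    and H :: "complex^'m^'m" and N :: nat and fF fg :: real
    and V :: "'n \<Rightarrow> 'n \<Rightarrow> real" and W :: "'n \<Rightarrow> real"
    and NF Ng \<epsilon> :: real
  assumes symF: "transpose F = F"
    and psdF: "\<forall>x. 0 \<le> x \<bullet> (F *v x)"
    and eta: "\<eta> > 0"
    and herm: "hermitian_mat H"
    and dimH: "CARD('m) = 2 ^ N"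
    and fF: "fF > 0" and fg: "fg > 0"
    and V: "\<forall>k l. 0 \<le> V k l \<and> V k l \<le> fF"
    and W: "\<forall>l. 0 \<le> W l \<and> W l \<le> spc H * fg"
    and eps: "\<epsilon> > 0"
    and NF: "NF > 0" and Ng: "Ng > 0"
    and errF: "(real CARD('n))^2 / NF *
                 (\<Sum>k\<in>UNIV. \<Sum>l\<in>UNIV. coef_a (reg_inv F \<eta>) g k l * V k l) = \<epsilon>^2 / 2"
    and errg: "real CARD('n) / Ng *
                 (\<Sum>l\<in>UNIV. coef_b (reg_inv F \<eta>) l * W l) = \<epsilon>^2 / 2"
  shows "NF \<le> 2 / \<epsilon>^2 * (real CARD('n))^4 * (spc (reg_inv F \<eta>))^2 * (infnorm g)^2 * fF
       \<and> Ng \<le> 2 / \<epsilon>^2 * (real CARD('n))^2 * spc (reg_inv F \<eta>) * spc H * fg"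
proof
  let ?n = "real CARD('n)" and ?Fi = "reg_inv F \<eta>"
  have factor_nonneg: "0 \<le> 2 / \<epsilon>^2 * ?n^2" "0 \<le> 2 / \<epsilon>^2 * ?n"
    by simp_all
  have "NF = 2 / \<epsilon>^2 * ?n^2 * (\<Sum>k\<in>UNIV. \<Sum>l\<in>UNIV. coef_a ?Fi g k l * V k l)"
    using errF eps by (intro measurements_eq_of_error) auto
  also have "\<dots> \<le> 2 / \<epsilon>^2 * ?n^2 * ((?n * spc ?Fi)^2 * (infnorm g)^2 * fF)"
    by (rule mult_left_mono[OF weighted_sum_coef_a_le[OF V] factor_nonneg(1)])
  finally show "NF \<le> 2 / \<epsilon>^2 * ?n^4 * (spc ?Fi)^2 * (infnorm g)^2 * fF"
    by (simp add: power_mult_distrib power2_eq_square power4_eq_xxxx mult_ac)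
  have "Ng = 2 / \<epsilon>^2 * ?n * (\<Sum>l\<in>UNIV. coef_b ?Fi l * W l)"
    using errg eps by (intro measurements_eq_of_error) auto
  also have "\<dots> \<le> 2 / \<epsilon>^2 * ?n * (?n * spc ?Fi * (spc H * fg))"
    by (rule mult_left_mono[OF weighted_sum_coef_b_le[OF W] factor_nonneg(2)])
  finally show "Ng \<le> 2 / \<epsilon>^2 * ?n^2 * spc ?Fi * spc H * fg"
    by (simp add: power2_eq_square mult_ac)
qed

end
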